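(* Let $S$ be a finite set, let $\sigma,\pi\in\mathrm{Perm}(S)$, and let $\tau\in\mathrm{Cyc}(\pi)$ be a transposition. Let $S'=S\setminus\mathrm{supp}(\tau)$ and $\pi'=\pi|_{S'}$. Then $g(\sigma,\pi)-g(\sigma\setminus\tau,\pi')=1$ if $\tau$ is a $\sigma$-bridge, and $g(\sigma,\pi)-g(\sigma\setminus\tau,\pi')=0$ otherwise.
   Context: $\mathrm{Perm}(S)$ denotes permutations of $S$, $\mathrm{supp}(\sigma)=\{k:\sigma(k)\ne k\}$, and $\mathrm{Cyc}(\sigma)$ is the set of cycles of $\sigma$ including fixed points as trivial cycles ($\#\mathrm{Cyc}$ counts them all). $\pi|_{S'}$ is the restriction of $\pi$ to the union $S'$ of its cycles. A $\sigma$-bridge is a transposition swapping two elements in different cycles of $\sigma$ (fixed points count as cycles). $\sigma\setminus\tau\in\mathrm{Perm}(S\setminus\mathrm{supp}(\tau))$ is $(\sigma\setminus\tau)(k)=(\tau\sigma)^{r(k)}(k)$ with $r(k)\ge1$ minimal such that $(\tau\sigma)^{r(k)}(k)\notin\mathrm{supp}(\tau)$. $\pi\bowtie\sigma\in\mathrm{Perm}(\{0,1\}\times S)$ is $(0,k)\mapsto(1,\sigma(k))$, $(1,k)\mapsto(0,\pi(k))$. The genus is defined by $2g(\sigma,\pi)=\#S+\#\mathrm{Cyc}(\sigma)-\#\mathrm{Cyc}(\pi)-\#\mathrm{Cyc}(\pi\bowtie\sigma)$. *)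

theory Defs
  imports "HOL-Combinatorics.Combinatorics" Complex_Main
begin

definition supp :: "('a \<Rightarrow> 'a) \<Rightarrow> 'a set" where
  "supp p = {k. p k \<noteq> k}"

(* Cyc(p): the cycles of p on S, including fixed points, each cycle represented
   by its underlying set (the orbit). *)
definition cycle_sets :: "'a set \<Rightarrow> ('a \<Rightarrow> 'a) \<Rightarrow> 'a set set" where
  "cycle_sets S p = (\<lambda>x. orbit p x) ` S"

definition num_cycles :: "'a set \<Rightarrow> ('a \<Rightarrow> 'a) \<Rightarrow> nat" where
  "num_cycles S p = card (cycle_sets S p)"

definition is_cycle_of :: "'a set \<Rightarrow> ('a \<Rightarrow> 'a) \<Rightarrow> ('a \<Rightarrow> 'a) \<Rightarrow> bool" where
  "is_cycle_of S p t \<longleftrightarrow> (\<exists>x\<in>S. t = (\<lambda>k. if k \<in> orbit p x then p k else k))"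

definition is_transposition :: "('a \<Rightarrow> 'a) \<Rightarrow> bool" where
  "is_transposition t \<longleftrightarrow> (\<exists>a b. a \<noteq> b \<and> t = transpose a b)"

definition is_bridge :: "'a set \<Rightarrow> ('a \<Rightarrow> 'a) \<Rightarrow> ('a \<Rightarrow> 'a) \<Rightarrow> bool" where
  "is_bridge S s t \<longleftrightarrow> (\<exists>a b. a \<noteq> b \<and> a \<in> S \<and> b \<in> S \<and> t = transpose a b
                             \<and> orbit s a \<noteq> orbit s b)"

(* restriction of p to a union A of its cycles (identity outside A) *)
definition restrict_perm :: "('a \<Rightarrow> 'a) \<Rightarrow> 'a set \<Rightarrow> 'a \<Rightarrow> 'a" where
  "restrict_perm p A = (\<lambda>k. if k \<in> A then p k else k)"

definition remove_perm :: "('a \<Rightarrow> 'a) \<Rightarrow> ('a \<Rightarrow> 'a) \<Rightarrow> 'a \<Rightarrow> 'a" where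
  "remove_perm s t = (\<lambda>k. if k \<in> supp t then k
      else ((t \<circ> s) ^^ (LEAST r. 1 \<le> r \<and> ((t \<circ> s) ^^ r) k \<notin> supp t)) k)"

(* pi \<bowtie> sigma on {0,1} x S, with 0 = False, 1 = True:
   (0,k) \<mapsto> (1, sigma k), (1,k) \<mapsto> (0, pi k) *)
definition bowtie :: "('a \<Rightarrow> 'a) \<Rightarrow> ('a \<Rightarrow> 'a) \<Rightarrow> bool \<times> 'a \<Rightarrow> bool \<times> 'a" where
  "bowtie p s = (\<lambda>(i, k). if i then (False, p k) else (True, s k))"

definition genus :: "'a set \<Rightarrow> ('a \<Rightarrow> 'a) \<Rightarrow> ('a \<Rightarrow> 'a) \<Rightarrow> real" where
  "genus S s p = (real (card S) + real (num_cycles S s) - real (num_cycles S p)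
                   - real (num_cycles (UNIV \<times> S) (bowtie p s))) / 2"

end

theory Submission
  imports Defs
begin

text \<open>
  Write \<open>\<tau> = (a b)\<close> and \<open>T = {a, b}\<close>. Then \<open>\<sigma> \<setminus> \<tau>\<close> is the first-return map of
  \<open>\<tau>\<sigma>\<close> to \<open>S - T\<close>, and passing to a first-return map loses exactly the cycles contained
  in \<open>T\<close>. Likewise \<open>\<pi>' = \<pi>|\<^bsub>S - T\<^esub>\<close> loses the single cycle \<open>\<tau>\<close>, and
  \<open>\<pi>' (\<sigma> \<setminus> \<tau>)\<close> is the first-return map of \<open>\<pi>' \<tau> \<sigma> = \<pi> \<sigma>\<close>, which has the same
  cycles inside \<open>T\<close> as \<open>\<tau>\<sigma>\<close>. Since the cycles of \<open>\<pi> \<bowtie> \<sigma>\<close> correspond to those of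
  \<open>\<pi>\<sigma>\<close>, the difference of genera collapses to \<open>(1 + #Cyc(\<sigma>) - #Cyc(\<tau>\<sigma>)) / 2\<close>.
  Composing with a transposition splits a cycle if \<open>a\<close> and \<open>b\<close> lie in the same
  cycle of \<open>\<sigma>\<close> and merges two cycles otherwise.
\<close>

section \<open>First-return maps\<close>

definition skip_perm :: "('a \<Rightarrow> 'a) \<Rightarrow> 'a set \<Rightarrow> 'a \<Rightarrow> 'a" where
  "skip_perm f T = (\<lambda>k. if k \<in> T then k else (f ^^ (LEAST r. 1 \<le> r \<and> (f ^^ r) k \<notin> T)) k)"

lemma remove_perm_eq_skip_perm: "remove_perm s t = skip_perm (t \<circ> s) (supp t)"
  unfolding remove_perm_def skip_perm_def by simp

lemma skip_perm_in [simp]: "k \<in> T \<Longrightarrow> skip_perm f T k = k"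
  by (simp add: skip_perm_def)

lemma skip_perm_eqI:
  assumes "k \<notin> T" "1 \<le> r" "(f ^^ r) k \<notin> T" "\<And>i. 1 \<le> i \<Longrightarrow> i < r \<Longrightarrow> (f ^^ i) k \<in> T"
  shows "skip_perm f T k = (f ^^ r) k"
proof -
  have "(LEAST r. 1 \<le> r \<and> (f ^^ r) k \<notin> T) = r"
    by (rule Least_equality) (use assms in \<open>auto simp: not_less[symmetric]\<close>)
  then show ?thesis using assms(1) by (simp add: skip_perm_def)
qed

lemma skip_perm_step: "k \<notin> T \<Longrightarrow> f k \<notin> T \<Longrightarrow> skip_perm f T k = f k"
  using skip_perm_eqI[of k T 1 f] by simp

lemma skip_perm_exit:
  assumes "permutation f" "k \<notin> T"
  obtains r where "skip_perm f T k = (f ^^ r) k" "1 \<le> r" "(f ^^ r) k \<notin> T"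
    "\<And>i. 1 \<le> i \<Longrightarrow> i < r \<Longrightarrow> (f ^^ i) k \<in> T"
proof -
  let ?P = "\<lambda>r. 1 \<le> r \<and> (f ^^ r) k \<notin> T"
  have "k \<in> orbit f k" using assms(1) by (rule permutation_self_in_orbit)
  then have "\<exists>r. ?P r" using assms(2) by (auto simp: orbit_altdef Suc_le_eq)
  then have "?P (Least ?P)" by (rule LeastI_ex)
  moreover have "\<not> ?P i" if "i < Least ?P" for i using not_less_Least[OF that] .
  moreover have "skip_perm f T k = (f ^^ Least ?P) k" using assms(2) by (simp add: skip_perm_def)
  ultimately show ?thesis using that by blast
qed

lemma orbit_skip_perm:
  assumes "permutation f" "x \<notin> T"
  shows "orbit (skip_perm f T) x = orbit f x - T"
proof
  show "orbit (skip_perm f T) x \<subseteq> orbit f x - T"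
  proof
    fix y assume "y \<in> orbit (skip_perm f T) x"
    then show "y \<in> orbit f x - T"
    proof induction
      case base
      obtain r where "skip_perm f T x = (f ^^ r) x" "1 \<le> r" "(f ^^ r) x \<notin> T"
        using skip_perm_exit[OF assms] .
      then show ?case by (auto simp: orbit_altdef)
    next
      case (step y)
      obtain r where "skip_perm f T y = (f ^^ r) y" "(f ^^ r) y \<notin> T"
        using skip_perm_exit[OF assms(1), of y T] step by blast
      then show ?case using step by (auto intro: funpow_in_orbit)
    qed
  qed
next
  have "(f ^^ n) x \<in> orbit (skip_perm f T) x"
    if "x \<notin> T" "1 \<le> n" "(f ^^ n) x \<notin> T" for n x
    using that
  proof (induction n arbitrary: x rule: less_induct)
    case (less n x)
    obtain r where r: "skip_perm f T x = (f ^^ r) x" "1 \<le> r" "(f ^^ r) x \<notin> T"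
        "\<And>i. 1 \<le> i \<Longrightarrow> i < r \<Longrightarrow> (f ^^ i) x \<in> T"
      using skip_perm_exit[OF assms(1) less.prems(1)] by blast
    with less.prems have "r \<le> n" by (meson not_le)
    show ?case
    proof (cases "r = n")
      case True
      then show ?thesis using r(1) by (metis orbit.base)
    next
      case False
      have "f ^^ n = f ^^ (n - r) \<circ> f ^^ r"
        using \<open>r \<le> n\<close> by (simp flip: funpow_add)
      then have "(f ^^ n) x = (f ^^ (n - r)) (skip_perm f T x)"
        using r(1) by simp
      moreover have "(f ^^ (n - r)) (skip_perm f T x) \<in> orbit (skip_perm f T) (skip_perm f T x)"
        using less.IH[of "n - r"] False \<open>r \<le> n\<close> r less.prems calculation by simp
      ultimately show ?thesis by (metis orbit_subset)
    qed
  qed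
  then show "orbit f x - T \<subseteq> orbit (skip_perm f T) x"
    using assms(2) by (auto simp: orbit_altdef Suc_le_eq)
qed

lemma inj_on_skip_perm:
  assumes "permutation f"
  shows "inj_on (skip_perm f T) (- T)"
proof -
  have eq_if_exit_le: "x = y" if "x \<notin> T" "skip_perm f T x = skip_perm f T y"
    "skip_perm f T x = (f ^^ r) x" "skip_perm f T y = (f ^^ s) y" "1 \<le> r" "r \<le> s"
    "\<And>i. 1 \<le> i \<Longrightarrow> i < s \<Longrightarrow> (f ^^ i) y \<in> T" for x y r s
  proof -
    have "f ^^ s = f ^^ r \<circ> f ^^ (s - r)"
      using \<open>r \<le> s\<close> by (simp flip: funpow_add)
    then have "(f ^^ r) x = (f ^^ r) ((f ^^ (s - r)) y)"
      using that(2-4) by simp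
    then have "x = (f ^^ (s - r)) y"
      using inj_fn[OF bij_is_inj[OF permutation_bijective[OF assms]]] by (meson injD)
    then show ?thesis using that by (cases "s - r = 0") auto
  qed
  show ?thesis
  proof (rule inj_onI)
    fix x y assume "x \<in> - T" "y \<in> - T" and eq: "skip_perm f T x = skip_perm f T y"
    then have "x \<notin> T" "y \<notin> T" by auto
    obtain r where r: "skip_perm f T x = (f ^^ r) x" "1 \<le> r"
        "\<And>i. 1 \<le> i \<Longrightarrow> i < r \<Longrightarrow> (f ^^ i) x \<in> T"
      using skip_perm_exit[OF assms \<open>x \<notin> T\<close>] by blast
    obtain s where s: "skip_perm f T y = (f ^^ s) y" "1 \<le> s"
        "\<And>i. 1 \<le> i \<Longrightarrow> i < s \<Longrightarrow> (f ^^ i) y \<in> T"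
      using skip_perm_exit[OF assms \<open>y \<notin> T\<close>] by blast
    show "x = y"
    proof (cases "r \<le> s")
      case True
      then show ?thesis by (rule eq_if_exit_le[OF \<open>x \<notin> T\<close> eq r(1) s(1) r(2) _ s(3)])
    next
      case False
      then have "s \<le> r" by simp
      then show ?thesis by (rule eq_if_exit_le[OF \<open>y \<notin> T\<close> eq[symmetric] s(1) r(1) s(2) _ r(3), symmetric])
    qed
  qed
qed

lemma skip_perm_permutes:
  assumes "f permutes S" "finite S"
  shows "skip_perm f T permutes (S - T)"
proof (rule bij_imp_permutes)
  have f: "permutation f" using assms(2,1) by (rule permutes_imp_permutation)
  show "skip_perm f T x = x" if "x \<notin> S - T" for x
    using that permutes_not_in[OF assms(1)] by (cases "x \<in> T") (auto simp: skip_perm_step)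
  have "skip_perm f T x \<in> S - T" if "x \<in> S - T" for x
  proof -
    from that have "x \<notin> T" by blast
    then obtain r where "skip_perm f T x = (f ^^ r) x" "(f ^^ r) x \<notin> T"
      using skip_perm_exit[OF f] by blast
    then show ?thesis using that permutes_in_funpow_image[OF assms(1)] by auto
  qed
  moreover have inj: "inj_on (skip_perm f T) (S - T)"
    using inj_on_skip_perm[OF f] by (rule inj_on_subset) auto
  ultimately have "skip_perm f T ` (S - T) = S - T"
    using assms(2) by (intro endo_inj_surj) auto
  with inj show "bij_betw (skip_perm f T) (S - T) (S - T)" by (simp add: bij_betw_def)
qed

lemma restrict_perm_eq_skip_perm:
  assumes "f permutes S" "\<And>x. x \<notin> T \<Longrightarrow> f x \<notin> T"
  shows "restrict_perm f (S - T) = skip_perm f T"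
proof
  fix x show "restrict_perm f (S - T) x = skip_perm f T x"
    using assms permutes_not_in[OF assms(1), of x]
    by (cases "x \<in> T") (auto simp: restrict_perm_def skip_perm_step)
qed

section \<open>Counting cycles\<close>

lemma orbit_swapped_pair:
  assumes "f a = b" "f b = a"
  shows "orbit f a = {a, b}"
proof
  show "orbit f a \<subseteq> {a, b}"
  proof
    fix y assume "y \<in> orbit f a"
    then show "y \<in> {a, b}" by induction (use assms in auto)
  qed
  show "{a, b} \<subseteq> orbit f a"
    using assms orbit.base[of f a] orbit.step[of b f a] by auto
qed

lemma orbit_eq_of_in_orbit: "permutation f \<Longrightarrow> y \<in> orbit f x \<Longrightarrow> orbit f y = orbit f x"
  by (rule orbit_cyclic_eq3[OF cyclic_on_orbit'])

lemma num_cycles_skip_perm: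
  assumes "f permutes S" "finite S"
  shows "num_cycles (S - T) (skip_perm f T) + card {Q \<in> cycle_sets S f. Q \<subseteq> T} = num_cycles S f"
proof -
  have f: "permutation f" using assms(2,1) by (rule permutes_imp_permutation)
  let ?out = "{Q \<in> cycle_sets S f. \<not> Q \<subseteq> T}"
  have "cycle_sets (S - T) (skip_perm f T) = (\<lambda>Q. Q - T) ` ?out"
  proof (intro equalityI subsetI)
    fix P assume "P \<in> cycle_sets (S - T) (skip_perm f T)"
    then obtain x where x: "x \<in> S" "x \<notin> T" "P = orbit f x - T"
      by (auto simp: cycle_sets_def orbit_skip_perm[OF f])
    moreover have "x \<in> orbit f x" using f by (rule permutation_self_in_orbit)
    ultimately show "P \<in> (\<lambda>Q. Q - T) ` ?out" by (auto simp: cycle_sets_def)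
  next
    fix P assume "P \<in> (\<lambda>Q. Q - T) ` ?out"
    then obtain y x where "y \<in> S" "P = orbit f y - T" "x \<in> orbit f y" "x \<notin> T"
      by (auto simp: cycle_sets_def)
    moreover have "x \<in> S" using calculation permutes_orbit_subset[OF assms(1)] by blast
    moreover have "orbit (skip_perm f T) x = P"
      using calculation by (simp add: orbit_skip_perm[OF f] orbit_eq_of_in_orbit[OF f])
    ultimately show "P \<in> cycle_sets (S - T) (skip_perm f T)" by (auto simp: cycle_sets_def)
  qed
  moreover have "inj_on (\<lambda>Q. Q - T) ?out"
  proof (rule inj_onI)
    fix Q1 Q2 assume "Q1 \<in> ?out" "Q2 \<in> ?out" "Q1 - T = Q2 - T"
    then obtain x y1 y2 where "x \<in> Q1" "x \<in> Q2" "Q1 = orbit f y1" "Q2 = orbit f y2"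
      by (auto simp: cycle_sets_def)
    then show "Q1 = Q2" using orbit_eq_of_in_orbit[OF f] by metis
  qed
  moreover have "card (cycle_sets S f) = card {Q \<in> cycle_sets S f. Q \<subseteq> T} + card ?out"
    using assms(2) by (subst card_Un_disjoint[symmetric]) (auto simp: cycle_sets_def intro: arg_cong[where f = card])
  ultimately show ?thesis unfolding num_cycles_def by (simp add: card_image)
qed

lemma num_cycles_cong:
  assumes "\<And>x. x \<in> A \<Longrightarrow> g x = f x" "\<And>x. x \<in> A \<Longrightarrow> f x \<in> A"
  shows "num_cycles A g = num_cycles A f"
proof -
  have "orbit g x = orbit f x" if "x \<in> A" for x
    by (rule orbit_cong0) (use assms that in auto)
  then show ?thesis unfolding num_cycles_def cycle_sets_def by (auto intro: arg_cong[where f = card])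
qed

lemma num_cycles_image:
  assumes "finite A" "q permutes A" "inj h" "\<And>x. x \<in> A \<Longrightarrow> g (h x) = h (q x)"
  shows "num_cycles (h ` A) g = num_cycles A q"
proof -
  have q: "permutation q" using assms(1,2) by (rule permutes_imp_permutation)
  have "orbit g (h x) = h ` orbit q x" if "x \<in> A" for x
    using orbit_inverse[where g = q and g' = g and f = h, OF permutation_self_in_orbit[OF q]]
      assms(4) permutes_orbit_subset[OF assms(2) that] by blast
  then have "cycle_sets (h ` A) g = image h ` cycle_sets A q"
    unfolding cycle_sets_def image_image by (auto intro: image_cong)
  moreover have "inj_on (image h) (cycle_sets A q)"
    using assms(3) by (simp add: inj_image_eq_iff inj_on_def)
  ultimately show ?thesis by (simp add: num_cycles_def card_image)
qed

lemma skip_perm_comp: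
  assumes "permutation f" "\<And>x. x \<in> T \<Longrightarrow> h x = x" "\<And>x. x \<notin> T \<Longrightarrow> h x \<notin> T"
  shows "skip_perm (h \<circ> f) T = h \<circ> skip_perm f T"
proof
  fix x show "skip_perm (h \<circ> f) T x = (h \<circ> skip_perm f T) x"
  proof (cases "x \<in> T")
    case False
    obtain r where r: "skip_perm f T x = (f ^^ r) x" "1 \<le> r" "(f ^^ r) x \<notin> T"
        "\<And>i. 1 \<le> i \<Longrightarrow> i < r \<Longrightarrow> (f ^^ i) x \<in> T"
      using skip_perm_exit[OF assms(1) False] by blast
    have inside: "((h \<circ> f) ^^ i) x = (f ^^ i) x" if "i < r" for i
      using that
    proof (induction i)
      case (Suc i)
      then have "(f ^^ Suc i) x \<in> T" using r(4)[of "Suc i"] by simp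
      then show ?case using Suc assms(2) by simp
    qed simp
    obtain m where "r = Suc m" using r(2) by (cases r) auto
    then have last: "((h \<circ> f) ^^ r) x = h ((f ^^ r) x)"
      using inside[of m] by simp
    have "skip_perm (h \<circ> f) T x = ((h \<circ> f) ^^ r) x"
      by (rule skip_perm_eqI) (use False r inside last assms(3) in auto)
    then show ?thesis using last r(1) by simp
  qed (simp add: assms(2))
qed

lemma cycles_within_cong:
  assumes "f permutes S" "g permutes S" "finite S"
    "\<And>z. f z \<in> T \<Longrightarrow> g z = f z" "\<And>z. g z \<in> T \<Longrightarrow> f z = g z"
  shows "{Q \<in> cycle_sets S f. Q \<subseteq> T} = {Q \<in> cycle_sets S g. Q \<subseteq> T}"
proof -
  have "{Q \<in> cycle_sets S f. Q \<subseteq> T} \<subseteq> {Q \<in> cycle_sets S g. Q \<subseteq> T}"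
    if "f permutes S" "\<And>z. f z \<in> T \<Longrightarrow> g z = f z" for f g
  proof
    fix Q assume "Q \<in> {Q \<in> cycle_sets S f. Q \<subseteq> T}"
    then obtain y where y: "y \<in> S" "Q = orbit f y" "Q \<subseteq> T" unfolding cycle_sets_def by blast
    have "orbit g y = orbit f y"
    proof (rule orbit_cong)
      show "y \<in> orbit f y"
        using that(1) assms(3) by (intro permutation_self_in_orbit permutes_imp_permutation)
      show "g s = f s" if "s \<in> orbit f y" for s
        using orbit.step[OF that] y \<open>\<And>z. f z \<in> T \<Longrightarrow> g z = f z\<close> by blast
    qed
    then show "Q \<in> {Q \<in> cycle_sets S g. Q \<subseteq> T}" using y unfolding cycle_sets_def by blast
  qed
  then show ?thesis using assms by blast
qed

lemma cycles_within_orbit: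
  assumes "permutation f" "x \<in> S"
  shows "{Q \<in> cycle_sets S f. Q \<subseteq> orbit f x} = {orbit f x}"
proof -
  have "Q = orbit f x" if "Q \<in> cycle_sets S f" "Q \<subseteq> orbit f x" for Q
  proof -
    from that(1) obtain y where "Q = orbit f y" by (auto simp: cycle_sets_def)
    moreover have "y \<in> orbit f y" using assms(1) by (rule permutation_self_in_orbit)
    ultimately show ?thesis using that(2) orbit_eq_of_in_orbit[OF assms(1)] by blast
  qed
  then show ?thesis using assms(2) by (auto simp: cycle_sets_def)
qed

lemma num_cycles_comp_skip_perm:
  assumes "f permutes S" "finite S" "h permutes (S - T)"
  shows "num_cycles S (h \<circ> f) + num_cycles (S - T) (skip_perm f T)
    = num_cycles S f + num_cycles (S - T) (h \<circ> skip_perm f T)"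
proof -
  have h_T: "h x = x" if "x \<in> T" for x
    using that permutes_not_in[OF assms(3)] by blast
  have h_not_T: "h x \<notin> T" if "x \<notin> T" for x
    using that permutes_in_image[OF assms(3)] permutes_not_in[OF assms(3)] by (cases "x \<in> S") auto
  have hf: "h \<circ> f permutes S"
    using assms(1) permutes_subset[OF assms(3)] by (intro permutes_compose) auto
  have "{Q \<in> cycle_sets S (h \<circ> f). Q \<subseteq> T} = {Q \<in> cycle_sets S f. Q \<subseteq> T}"
    using h_T h_not_T by (intro cycles_within_cong[OF hf assms(1,2)]) (metis comp_apply)+
  moreover have "skip_perm (h \<circ> f) T = h \<circ> skip_perm f T"
    using assms(2,1) h_T h_not_T by (intro skip_perm_comp permutes_imp_permutation)
  ultimately show ?thesis
    using num_cycles_skip_perm[OF hf assms(2), of T] num_cycles_skip_perm[OF assms(1,2), of T] by simp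
qed

lemma num_cycles_skip_perm_singleton:
  assumes "f permutes S" "finite S" "b \<in> S"
  shows "num_cycles (S - {b}) (skip_perm f {b}) + (if f b = b then 1 else 0) = num_cycles S f"
proof -
  have f: "permutation f" using assms(2,1) by (rule permutes_imp_permutation)
  have "Q = {b}" if "Q \<in> cycle_sets S f" "Q \<subseteq> {b}" for Q
  proof -
    from that(1) obtain y where "Q = orbit f y" unfolding cycle_sets_def by blast
    then show "Q = {b}" using that(2) orbit_nonempty[of f y] by blast
  qed
  then have "{Q \<in> cycle_sets S f. Q \<subseteq> {b}} = {Q \<in> cycle_sets S f. Q = {b}}" by blast
  also have "\<dots> = (if f b = b then {{b}} else {})"
  proof -
    have "orbit f y = {b} \<longleftrightarrow> y = b \<and> f b = b" for y
    proof
      assume "orbit f y = {b}"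
      moreover have "y \<in> orbit f y" using f by (rule permutation_self_in_orbit)
      ultimately show "y = b \<and> f b = b" using orbit_eq_singleton_iff[of f y] by auto
    qed (simp add: orbit_eq_singleton_iff)
    then have "{b} \<in> cycle_sets S f \<longleftrightarrow> f b = b"
      using assms(3) unfolding cycle_sets_def by (metis imageE image_eqI)
    then show ?thesis by auto
  qed
  finally show ?thesis using num_cycles_skip_perm[OF assms(1,2), of "{b}"] by (simp split: if_splits)
qed

section \<open>Composing with a transposition\<close>

lemma skip_perm_singleton:
  assumes "inj f" "x \<noteq> b"
  shows "skip_perm f {b} x = (if f x = b then f b else f x)"
proof (cases "f x = b")
  case True
  then have "f b \<noteq> b" using assms by (metis injD)
  then have "skip_perm f {b} x = (f ^^ 2) x"
    using True assms(2) by (intro skip_perm_eqI) (auto simp: numeral_2_eq_2 less_Suc_eq)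
  then show ?thesis using True by (simp add: numeral_2_eq_2)
qed (simp add: skip_perm_step assms)

lemma skip_perm_transpose_comp_fixed:
  assumes "inj \<sigma>" "\<sigma> b = b" "a \<noteq> b"
  shows "skip_perm (transpose a b \<circ> \<sigma>) {b} = skip_perm \<sigma> {b}"
proof
  fix x
  have "inj (transpose a b \<circ> \<sigma>)" using assms(1) by (simp add: inj_compose)
  moreover have "\<sigma> x \<noteq> b" if "x \<noteq> b" using that assms(1,2) by (metis injD)
  ultimately show "skip_perm (transpose a b \<circ> \<sigma>) {b} x = skip_perm \<sigma> {b} x"
    using assms by (cases "x = b") (auto simp: skip_perm_singleton transpose_def)
qed

lemma skip_perm_transpose_comp_moved:
  assumes "inj \<sigma>" "\<sigma> b \<noteq> b" "a \<noteq> b"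
  shows "skip_perm (transpose a b \<circ> \<sigma>) {b} = transpose a (\<sigma> b) \<circ> skip_perm \<sigma> {b}"
proof
  fix x
  have "inj (transpose a b \<circ> \<sigma>)" using assms(1) by (simp add: inj_compose)
  moreover have "\<sigma> x \<noteq> \<sigma> b" if "x \<noteq> b" using that assms(1) by (metis injD)
  ultimately show "skip_perm (transpose a b \<circ> \<sigma>) {b} x = (transpose a (\<sigma> b) \<circ> skip_perm \<sigma> {b}) x"
    using assms by (cases "x = b") (auto simp: skip_perm_singleton transpose_def)
qed

lemma same_orbit_skip_perm_singleton:
  assumes "permutation \<sigma>" "a \<noteq> b" "\<sigma> b \<noteq> b"
  shows "orbit (skip_perm \<sigma> {b}) a = orbit (skip_perm \<sigma> {b}) (\<sigma> b) \<longleftrightarrow> orbit \<sigma> a = orbit \<sigma> b"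
proof -
  have "orbit (skip_perm \<sigma> {b}) a = orbit \<sigma> a - {b}"
    "orbit (skip_perm \<sigma> {b}) (\<sigma> b) = orbit \<sigma> b - {b}"
    using orbit_skip_perm[OF assms(1)] permutation_orbit_step[OF assms(1)] assms(2,3) by auto
  moreover have "orbit \<sigma> a = orbit \<sigma> b" if "orbit \<sigma> a - {b} = orbit \<sigma> b - {b}"
    using that permutation_self_in_orbit[OF assms(1), of a] assms(2)
      orbit_eq_of_in_orbit[OF assms(1)] by blast
  ultimately show ?thesis by auto
qed

text \<open>
  Induction on \<open>card S\<close>, deleting \<open>b\<close>: the first-return map of \<open>(a b) \<circ> \<sigma>\<close> to
  \<open>S - {b}\<close> is \<open>(a c) \<circ> \<sigma>'\<close>, where \<open>c = \<sigma> b\<close> and \<open>\<sigma>'\<close> is the first-return map of \<open>\<sigma>\<close>.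
\<close>

lemma num_cycles_transpose_comp:
  assumes "finite S" "\<sigma> permutes S" "a \<in> S" "b \<in> S" "a \<noteq> b"
  shows "int (num_cycles S (transpose a b \<circ> \<sigma>)) =
         int (num_cycles S \<sigma>) + (if orbit \<sigma> a = orbit \<sigma> b then 1 else -1)"
  using assms
proof (induction "card S" arbitrary: S \<sigma> a b rule: less_induct)
  case less
  let ?g = "transpose a b \<circ> \<sigma>" and ?\<sigma>' = "skip_perm \<sigma> {b}"
  have \<sigma>: "permutation \<sigma>" "inj \<sigma>"
    using less.prems permutes_imp_permutation permutes_inj by blast+
  have count_g: "num_cycles (S - {b}) (skip_perm ?g {b}) + (if ?g b = b then 1 else 0) = num_cycles S ?g"
    using less.prems by (intro num_cycles_skip_perm_singleton permutes_compose permutes_swap_id)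
  have count_\<sigma>: "num_cycles (S - {b}) ?\<sigma>' + (if \<sigma> b = b then 1 else 0) = num_cycles S \<sigma>"
    using less.prems by (intro num_cycles_skip_perm_singleton)
  show ?case
  proof (cases "\<sigma> b = b")
    case True
    have "orbit \<sigma> a \<noteq> orbit \<sigma> b"
      using True permutation_self_in_orbit[OF \<sigma>(1), of a] less.prems(5)
      by (auto simp: orbit_eq_singleton_iff[THEN iffD2])
    then show ?thesis
      using count_g count_\<sigma> skip_perm_transpose_comp_fixed[OF \<sigma>(2) True less.prems(5)] True less.prems(5)
      by simp
  next
    case False
    define c where "c = \<sigma> b"
    have skip_g: "skip_perm ?g {b} = transpose a c \<circ> ?\<sigma>'"
      unfolding c_def using \<sigma>(2) False less.prems(5) by (rule skip_perm_transpose_comp_moved)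
    show ?thesis
    proof (cases "c = a")
      case True
      then have "orbit \<sigma> a = orbit \<sigma> b"
        using orbit_eq_of_in_orbit[OF \<sigma>(1)] orbit.base[of \<sigma> b] c_def by metis
      then show ?thesis using count_g count_\<sigma> skip_g True False c_def by simp
    next
      case c_ne_a: False
      have c: "c \<in> S - {b}"
        using False less.prems(2,4) c_def permutes_in_image by fastforce
      have IH: "int (num_cycles (S - {b}) (transpose a c \<circ> ?\<sigma>')) =
          int (num_cycles (S - {b}) ?\<sigma>') + (if orbit ?\<sigma>' a = orbit ?\<sigma>' c then 1 else -1)"
        using less.prems c c_ne_a card_Diff1_less[OF less.prems(1,4)]
        by (intro less.hyps skip_perm_permutes) auto
      have "orbit ?\<sigma>' a = orbit ?\<sigma>' c \<longleftrightarrow> orbit \<sigma> a = orbit \<sigma> b"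
        unfolding c_def using \<sigma>(1) less.prems(5) False by (rule same_orbit_skip_perm_singleton)
      moreover have "?g b \<noteq> b" using False c_ne_a less.prems(5) c_def by (auto simp: transpose_def)
      ultimately show ?thesis using count_g count_\<sigma> skip_g IH False by simp
    qed
  qed
qed

section \<open>The genus\<close>

text \<open>\<open>bowtie p s\<close> swaps the two layers even outside \<open>UNIV \<times> A\<close>, hence the restriction.\<close>

lemma bowtie_restrict_permutes:
  assumes "finite A" "p permutes A" "s permutes A"
  shows "restrict_perm (bowtie p s) (UNIV \<times> A) permutes (UNIV \<times> A)"
proof (rule bij_imp_permutes)
  let ?b = "restrict_perm (bowtie p s) (UNIV \<times> A)"
  have "?b z \<in> UNIV \<times> A" if z: "z \<in> UNIV \<times> A" for z
  proof -
    obtain i k where "z = (i, k)" "k \<in> A" using z by auto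
    then show ?thesis
      using assms(2,3) by (cases i) (auto simp: restrict_perm_def bowtie_def permutes_in_image)
  qed
  then have into: "?b ` (UNIV \<times> A) \<subseteq> UNIV \<times> A" by (rule image_subsetI)
  have "inj_on ?b (UNIV \<times> A)"
  proof (rule inj_onI, clarify)
    fix i k j l assume "k \<in> A" "l \<in> A" "?b (i, k) = ?b (j, l)"
    then have "bowtie p s (i, k) = bowtie p s (j, l)" by (simp add: restrict_perm_def)
    then show "i = j \<and> k = l"
      using permutes_inj[OF assms(2)] permutes_inj[OF assms(3)]
      by (cases i; cases j) (simp_all add: bowtie_def inj_eq)
  qed
  with into show "bij_betw ?b (UNIV \<times> A) (UNIV \<times> A)"
    using assms(1) by (simp add: bij_betw_def endo_inj_surj)
qed (simp add: restrict_perm_def)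

text \<open>
  Every cycle of \<open>p \<bowtie> s\<close> meets the layer \<open>False\<close>, and the first return to that layer
  is \<open>p \<circ> s\<close>.
\<close>

lemma num_cycles_bowtie:
  assumes "finite A" "p permutes A" "s permutes A"
  shows "num_cycles (UNIV \<times> A) (bowtie p s) = num_cycles A (p \<circ> s)"
proof -
  let ?b = "restrict_perm (bowtie p s) (UNIV \<times> A)" and ?T = "{True} \<times> A"
  have b: "?b permutes UNIV \<times> A" using assms by (rule bowtie_restrict_permutes)
  then have "permutation ?b" using assms(1) by (intro permutes_imp_permutation) auto
  have "num_cycles (UNIV \<times> A) (bowtie p s) = num_cycles (UNIV \<times> A) ?b"
    by (intro num_cycles_cong) (simp add: restrict_perm_def, simp add: permutes_in_image[OF b])
  also have "\<dots> = num_cycles (UNIV \<times> A - ?T) (skip_perm ?b ?T)"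
  proof -
    have "\<not> Q \<subseteq> ?T" if "Q \<in> cycle_sets (UNIV \<times> A) ?b" for Q
    proof -
      from that obtain i k where "k \<in> A" "Q = orbit ?b (i, k)" by (auto simp: cycle_sets_def)
      moreover have "(i, k) \<in> Q" "?b (i, k) \<in> Q"
        using calculation \<open>permutation ?b\<close> by (auto intro: permutation_self_in_orbit orbit.base)
      ultimately show ?thesis by (cases i) (auto simp: restrict_perm_def bowtie_def)
    qed
    then have no_cycle_in_T: "{Q \<in> cycle_sets (UNIV \<times> A) ?b. Q \<subseteq> ?T} = {}" by blast
    show ?thesis
      using num_cycles_skip_perm[OF b, of ?T] assms(1) unfolding no_cycle_in_T by simp
  qed
  also have "UNIV \<times> A - ?T = Pair False ` A" by auto
  also have "num_cycles (Pair False ` A) (skip_perm ?b ?T) = num_cycles A (p \<circ> s)"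
  proof (rule num_cycles_image[OF assms(1) permutes_compose[OF assms(3,2)]])
    fix k assume k: "k \<in> A"
    have "skip_perm ?b ?T (False, k) = (?b ^^ 2) (False, k)"
      using k permutes_in_image[OF assms(3)]
      by (intro skip_perm_eqI) (auto simp: numeral_2_eq_2 less_Suc_eq restrict_perm_def bowtie_def)
    then show "skip_perm ?b ?T (False, k) = (False, (p \<circ> s) k)"
      using k permutes_in_image[OF assms(3)] by (simp add: numeral_2_eq_2 restrict_perm_def bowtie_def)
  qed (simp add: inj_def)
  finally show ?thesis .
qed

lemma supp_transpose: "a \<noteq> b \<Longrightarrow> supp (transpose a b) = {a, b}"
  by (auto simp: supp_def transpose_def)

lemma is_bridge_transpose_iff:
  assumes "a \<noteq> b" "a \<in> S" "b \<in> S"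
  shows "is_bridge S \<sigma> (transpose a b) \<longleftrightarrow> orbit \<sigma> a \<noteq> orbit \<sigma> b"
proof
  assume "is_bridge S \<sigma> (transpose a b)"
  then obtain a' b' where "a' \<noteq> b'" and eq: "transpose a b = transpose a' b'"
    and "orbit \<sigma> a' \<noteq> orbit \<sigma> b'"
    unfolding is_bridge_def by blast
  moreover have "{a', b'} = {a, b}"
    using supp_transpose[OF \<open>a' \<noteq> b'\<close>] supp_transpose[OF assms(1)] eq by simp
  ultimately show "orbit \<sigma> a \<noteq> orbit \<sigma> b" by (auto simp: doubleton_eq_iff)
qed (use assms in \<open>auto simp: is_bridge_def\<close>)

lemma transposition_cycle_swaps:
  assumes "\<pi> permutes S" "is_cycle_of S \<pi> (transpose a b)" "a \<noteq> b"
  shows "\<pi> a = b" "\<pi> b = a" "a \<in> S" "b \<in> S"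
proof -
  obtain x where "x \<in> S" and \<tau>: "transpose a b = (\<lambda>k. if k \<in> orbit \<pi> x then \<pi> k else k)"
    using assms(2) unfolding is_cycle_of_def by blast
  have "(if a \<in> orbit \<pi> x then \<pi> a else a) = b" "(if b \<in> orbit \<pi> x then \<pi> b else b) = a"
    using fun_cong[OF \<tau>, of a] fun_cong[OF \<tau>, of b] by simp_all
  then have "\<pi> a = b" "\<pi> b = a" "a \<in> orbit \<pi> x" "b \<in> orbit \<pi> x"
    using assms(3) by (simp_all split: if_splits)
  then show "\<pi> a = b" "\<pi> b = a" "a \<in> S" "b \<in> S"
    using permutes_orbit_subset[OF assms(1) \<open>x \<in> S\<close>] by auto
qed

lemma genus_eq_num_cycles_comp:
  assumes "finite S" "\<sigma> permutes S" "\<pi> permutes S"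
  shows "genus S \<sigma> \<pi> = (real (card S) + real (num_cycles S \<sigma>) - real (num_cycles S \<pi>)
    - real (num_cycles S (\<pi> \<circ> \<sigma>))) / 2"
  using num_cycles_bowtie[OF assms(1,3,2)] by (simp add: genus_def)

lemma restrict_perm_off_swapped_pair:
  assumes "finite S" "\<pi> permutes S" "a \<in> S" "\<pi> a = b" "\<pi> b = a"
  shows "restrict_perm \<pi> (S - {a, b}) permutes (S - {a, b})"
    and "restrict_perm \<pi> (S - {a, b}) \<circ> transpose a b = \<pi>"
    and "num_cycles (S - {a, b}) (restrict_perm \<pi> (S - {a, b})) + 1 = num_cycles S \<pi>"
proof -
  let ?T = "{a, b}"
  have \<pi>_T: "\<pi> x \<notin> ?T" if "x \<notin> ?T" for x
  proof -
    have "\<pi> x \<noteq> \<pi> a" "\<pi> x \<noteq> \<pi> b" using that inj_eq[OF permutes_inj[OF assms(2)]] by auto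
    then show ?thesis using assms(4,5) by auto
  qed
  have h: "restrict_perm \<pi> (S - ?T) = skip_perm \<pi> ?T"
    using assms(2) \<pi>_T by (rule restrict_perm_eq_skip_perm)
  show "restrict_perm \<pi> (S - ?T) permutes (S - ?T)"
    unfolding h using assms(2,1) by (rule skip_perm_permutes)
  show "restrict_perm \<pi> (S - ?T) \<circ> transpose a b = \<pi>"
  proof
    fix x show "(restrict_perm \<pi> (S - ?T) \<circ> transpose a b) x = \<pi> x"
      using assms(4,5) \<pi>_T by (cases "x \<in> ?T") (auto simp: h skip_perm_step)
  qed
  have "{Q \<in> cycle_sets S \<pi>. Q \<subseteq> ?T} = {?T}"
    using cycles_within_orbit[OF permutes_imp_permutation[OF assms(1,2)] assms(3)]
    by (simp add: orbit_swapped_pair assms(4,5))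
  then show "num_cycles (S - ?T) (restrict_perm \<pi> (S - ?T)) + 1 = num_cycles S \<pi>"
    using num_cycles_skip_perm[OF assms(2,1), of ?T] by (simp add: h)
qed

lemma genus_remove_transposition:
  assumes "finite S" "\<sigma> permutes S" "\<pi> permutes S" "a \<in> S" "b \<in> S" "a \<noteq> b" "\<pi> a = b" "\<pi> b = a"
  shows "genus S \<sigma> \<pi> - genus (S - {a, b}) (skip_perm (transpose a b \<circ> \<sigma>) {a, b})
      (restrict_perm \<pi> (S - {a, b})) = (if orbit \<sigma> a = orbit \<sigma> b then 0 else 1)"
proof -
  let ?T = "{a, b}" and ?f = "transpose a b \<circ> \<sigma>" and ?h = "restrict_perm \<pi> (S - {a, b})"
  note h = restrict_perm_off_swapped_pair[OF assms(1,3,4,7,8)]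
  have f: "?f permutes S" using assms(2,4,5) by (intro permutes_compose permutes_swap_id)
  have skip_f: "skip_perm ?f ?T permutes (S - ?T)" using f assms(1) by (rule skip_perm_permutes)
  have "?h \<circ> ?f = \<pi> \<circ> \<sigma>" using h(2) by (simp add: o_assoc)
  then have cycles_\<pi>\<sigma>: "num_cycles S (\<pi> \<circ> \<sigma>) + num_cycles (S - ?T) (skip_perm ?f ?T)
      = num_cycles S ?f + num_cycles (S - ?T) (?h \<circ> skip_perm ?f ?T)"
    using num_cycles_comp_skip_perm[OF f assms(1) h(1)] by simp
  have "?T \<subseteq> S" using assms(4,5) by simp
  then have card: "card (S - ?T) + 2 = card S"
    using card_mono[OF assms(1) \<open>?T \<subseteq> S\<close>] assms(1,6) by (simp add: card_Diff_subset)
  have "genus S \<sigma> \<pi> - genus (S - ?T) (skip_perm ?f ?T) ?h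
      = (1 + real (num_cycles S \<sigma>) - real (num_cycles S ?f)) / 2"
    using card[THEN arg_cong[where f = real]] cycles_\<pi>\<sigma>[THEN arg_cong[where f = real]]
      h(3)[THEN arg_cong[where f = real]]
    unfolding genus_eq_num_cycles_comp[OF assms(1-3)]
      genus_eq_num_cycles_comp[OF finite_Diff[OF assms(1)] skip_f h(1)]
    by (simp add: field_simps)
  then show ?thesis
    using num_cycles_transpose_comp[OF assms(1,2,4-6)] by (cases "orbit \<sigma> a = orbit \<sigma> b") simp_all
qed

theorem lemma3p17:
  fixes S :: "'a set" and \<sigma> \<pi> \<tau> :: "'a \<Rightarrow> 'a"
  assumes "finite S"
    and "\<sigma> permutes S" and "\<pi> permutes S"
    and "is_cycle_of S \<pi> \<tau>" and "is_transposition \<tau>"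
  shows "genus S \<sigma> \<pi> - genus (S - supp \<tau>) (remove_perm \<sigma> \<tau>) (restrict_perm \<pi> (S - supp \<tau>))
           = (if is_bridge S \<sigma> \<tau> then 1 else 0)"
proof -
  obtain a b where "a \<noteq> b" and \<tau>: "\<tau> = transpose a b"
    using assms(5) unfolding is_transposition_def by blast
  have "is_cycle_of S \<pi> (transpose a b)" using assms(4) by (simp add: \<tau>)
  note swaps = transposition_cycle_swaps[OF assms(3) this \<open>a \<noteq> b\<close>]
  have "supp \<tau> = {a, b}" using \<open>a \<noteq> b\<close> by (simp add: \<tau> supp_transpose)
  moreover have "is_bridge S \<sigma> \<tau> \<longleftrightarrow> orbit \<sigma> a \<noteq> orbit \<sigma> b"
    using is_bridge_transpose_iff[OF \<open>a \<noteq> b\<close> swaps(3,4)] by (simp add: \<tau>)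
  ultimately show ?thesis
    using genus_remove_transposition[OF assms(1-3) swaps(3,4) \<open>a \<noteq> b\<close> swaps(1,2)]
    by (simp add: remove_perm_eq_skip_perm \<tau>)
qed

end
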